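(* Let $p$ be a prime, $m\geq 1$, and $1\leq r_1<r_2<\dots<r_m$ integers. Let $F(x)=(x-1)\Phi_{p^{r_1}}(x)\Phi_{p^{r_2}}(x)\cdots\Phi_{p^{r_m}}(x)$. If $E$ is a set of roots of $F$ such that $F(\epsilon/\epsilon')=0$ for all $\epsilon,\epsilon'\in E$, then $\#E\leq p^m$.
   Context: $\Phi_s(x)$ denotes the $s$-th cyclotomic polynomial. *)

theory Defs
  imports "HOL-Complex_Analysis.Complex_Analysis" "HOL-Computational_Algebra.Polynomial"
begin

definition cyclotomic :: "nat \<Rightarrow> complex poly" where
  "cyclotomic n = (\<Prod>k\<in>{k. k < n \<and> coprime k n}. [:- cis (2 * pi * real k / real n), 1:])"

end

theory Submission
  imports Defs "HOL-Library.Real_Mod"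
begin

text \<open>Let R be the largest exponent and \<zeta> a = exp (2 \<pi> i a / p^R). Every root of F is some
  \<zeta> a with 0 \<le> a < p^R, and \<zeta> a / \<zeta> b = \<zeta> (a - b) can be a root of \<Phi>_{p^r} only if the
  p-adic valuation of a - b is R - r. Hence the exponents of the elements of E form a set A of
  integers whose pairwise differences have valuations in a set S of at most m values. Two
  distinct integers differ in the base-p digit at the position given by the valuation of their
  difference, so the digits at the positions in S determine an element of A, and
  #E \<le> #A \<le> p^#S \<le> p^m.\<close>

definition root_unity :: "nat \<Rightarrow> int \<Rightarrow> complex" where
  "root_unity N a = cis (2 * pi * of_int a / of_nat N)"

lemma root_unity_diff: "root_unity N a / root_unity N b = root_unity N (a - b)"
  by (simp add: root_unity_def cis_divide diff_divide_distrib right_diff_distrib)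

lemma root_unity_eq_1_iff:
  assumes "N > 0"
  shows "root_unity N a = 1 \<longleftrightarrow> int N dvd a"
proof -
  have "root_unity N a = 1 \<longleftrightarrow> (\<exists>k::int. of_int a = of_int (int N * k) * (1::real))"
    using assms by (auto simp: root_unity_def cis_eq_1_iff field_simps)
  also have "\<dots> \<longleftrightarrow> int N dvd a"
    by (auto simp del: of_int_mult)
  finally show ?thesis .
qed

lemma root_unity_eq_iff:
  assumes "N > 0"
  shows "root_unity N a = root_unity N b \<longleftrightarrow> int N dvd a - b"
proof -
  have "root_unity N b \<noteq> 0" by (simp add: root_unity_def)
  then have "root_unity N a = root_unity N b \<longleftrightarrow> root_unity N (a - b) = 1"
    by (simp flip: root_unity_diff)
  with root_unity_eq_1_iff[OF assms] show ?thesis by simp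
qed

lemma cis_eq_root_unity:
  assumes "n dvd N" "N > 0"
  shows "cis (2 * pi * real k / real n) = root_unity N (int k * int (N div n))"
proof -
  have "real N = real n * real (N div n)"
    using assms(1) by (metis dvd_mult_div_cancel of_nat_mult)
  with assms show ?thesis by (auto simp: root_unity_def field_simps)
qed

lemma poly_cyclotomic_eq_0_iff:
  "poly (cyclotomic n) z = 0 \<longleftrightarrow> (\<exists>k<n. coprime k n \<and> z = cis (2 * pi * real k / real n))"
  by (auto simp: cyclotomic_def poly_prod)

lemma poly_cyclotomic_eq_0_imp_root_unity:
  assumes "poly (cyclotomic n) z = 0" "n dvd N" "N > 0"
  shows "\<exists>a\<in>{0..<int N}. z = root_unity N a"
proof -
  obtain k where k: "k < n" "z = cis (2 * pi * real k / real n)"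
    using assms(1) poly_cyclotomic_eq_0_iff by blast
  have "k * (N div n) < n * (N div n)"
    using k(1) assms by (auto intro!: mult_strict_right_mono simp: dvd_div_eq_0_iff)
  then have "int k * int (N div n) \<in> {0..<int N}"
    using assms(2) by (simp flip: of_nat_mult)
  with k(2) cis_eq_root_unity[OF assms(2,3)] show ?thesis by blast
qed

lemma poly_cyclotomic_product_eq_0_iff:
  assumes "finite I"
  shows "poly ([:-1, 1:] * (\<Prod>i\<in>I. cyclotomic (n i))) z = 0 \<longleftrightarrow>
           z = 1 \<or> (\<exists>i\<in>I. poly (cyclotomic (n i)) z = 0)"
  using assms by (auto simp: poly_prod)

lemma poly_cyclotomic_product_eq_0_imp_root_unity:
  assumes "finite I" "\<And>i. i \<in> I \<Longrightarrow> n i dvd N" "N > 0"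
    and "poly ([:-1, 1:] * (\<Prod>i\<in>I. cyclotomic (n i))) z = 0"
  shows "\<exists>a\<in>{0..<int N}. z = root_unity N a"
proof -
  have "z = 1 \<or> (\<exists>i\<in>I. poly (cyclotomic (n i)) z = 0)"
    using assms(1,4) by (simp only: poly_cyclotomic_product_eq_0_iff)
  then show ?thesis
  proof
    assume "z = 1"
    then show ?thesis using assms(3) by (intro bexI[of _ 0]) (auto simp: root_unity_def)
  next
    assume "\<exists>i\<in>I. poly (cyclotomic (n i)) z = 0"
    then show ?thesis using assms(2,3) poly_cyclotomic_eq_0_imp_root_unity by blast
  qed
qed

lemma multiplicity_of_root_of_cyclotomic_prime_power:
  fixes p :: nat and d :: int
  assumes "p > 1" "r \<le> R" "\<not> int p ^ R dvd d"
    and "poly (cyclotomic (p ^ r)) (root_unity (p ^ R) d) = 0"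
  shows "multiplicity (int p) d = R - r"
proof -
  define s where "s = R - r"
  have R: "R = s + r" using assms(2) by (simp add: s_def)
  obtain k where k: "coprime k (p ^ r)"
    and root: "root_unity (p ^ R) d = cis (2 * pi * real k / real (p ^ r))"
    using assms(4) poly_cyclotomic_eq_0_iff by blast
  have "root_unity (p ^ R) d = root_unity (p ^ R) (int k * int p ^ s)"
    using root cis_eq_root_unity[of "p ^ r" "p ^ R" k] assms(1) by (simp add: R power_add)
  then have congr: "int p ^ R dvd d - int k * int p ^ s"
    using assms(1) by (simp add: root_unity_eq_iff)
  have "r \<noteq> 0"
  proof
    assume "r = 0"
    then have "int p ^ R dvd int k * int p ^ s" using R by simp
    with congr have "int p ^ R dvd (d - int k * int p ^ s) + int k * int p ^ s"
      by (rule dvd_add)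
    then have "int p ^ R dvd d" by simp
    with assms(3) show False ..
  qed
  have "int p ^ s dvd int p ^ R" by (simp add: R le_imp_power_dvd)
  then have "int p ^ s dvd d - int k * int p ^ s" using congr by (rule dvd_trans)
  then have "int p ^ s dvd (d - int k * int p ^ s) + int k * int p ^ s" by (rule dvd_add) simp
  then have "int p ^ s dvd d" by simp
  moreover have "\<not> int p ^ Suc s dvd d"
  proof
    assume "int p ^ Suc s dvd d"
    moreover have "int p ^ Suc s dvd int p ^ R"
      by (rule le_imp_power_dvd) (use R \<open>r \<noteq> 0\<close> in simp)
    then have "int p ^ Suc s dvd d - int k * int p ^ s" using congr by (rule dvd_trans)
    ultimately have "int p ^ Suc s dvd d - (d - int k * int p ^ s)" by (rule dvd_diff)
    then have "int p * int p ^ s dvd int k * int p ^ s" by simp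
    with assms(1) have "p dvd k" by simp
    moreover have "p dvd p ^ r" using \<open>r \<noteq> 0\<close> by simp
    ultimately have "is_unit p" using k(1) by (metis coprime_common_divisor)
    with assms(1) show False by simp
  qed
  ultimately show ?thesis by (simp add: multiplicity_eqI s_def)
qed

lemma digit_at_multiplicity_neq:
  fixes p :: int and a b :: int
  assumes "p > 1" "a \<noteq> b"
  defines "v \<equiv> multiplicity p (a - b)"
  shows "a div p ^ v mod p \<noteq> b div p ^ v mod p"
proof
  assume digit: "a div p ^ v mod p = b div p ^ v mod p"
  have "a mod p ^ v = b mod p ^ v"
    using multiplicity_dvd[of p "a - b"] by (simp add: v_def mod_eq_dvd_iff)
  with digit have "a mod p ^ Suc v = b mod p ^ Suc v"
    using assms(1) by (simp add: zmod_zmult2_eq mult.commute[of p])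
  then have "p ^ Suc v dvd a - b" by (simp add: mod_eq_dvd_iff)
  moreover have "\<not> p ^ Suc v dvd a - b"
    using power_dvd_iff_le_multiplicity[of "a - b" p "Suc v"] assms by (simp add: v_def)
  ultimately show False by contradiction
qed

lemma card_le_power_if_multiplicity_diff_in:
  fixes p :: nat and A :: "int set"
  assumes "p > 1" "finite S"
    and "\<And>a b. a \<in> A \<Longrightarrow> b \<in> A \<Longrightarrow> a \<noteq> b \<Longrightarrow> multiplicity (int p) (a - b) \<in> S"
  shows "card A \<le> p ^ card S"
proof -
  define digits where "digits a = (\<lambda>s\<in>S. a div int p ^ s mod int p)" for a
  have "inj_on digits A"
  proof (rule inj_onI, rule ccontr)
    fix a b assume "a \<in> A" "b \<in> A" "digits a = digits b" "a \<noteq> b"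
    define v where "v = multiplicity (int p) (a - b)"
    have "v \<in> S"
      using assms(3) \<open>a \<in> A\<close> \<open>b \<in> A\<close> \<open>a \<noteq> b\<close> by (simp add: v_def)
    with \<open>digits a = digits b\<close> have "a div int p ^ v mod int p = b div int p ^ v mod int p"
      by (metis digits_def restrict_apply')
    moreover have "a div int p ^ v mod int p \<noteq> b div int p ^ v mod int p"
      unfolding v_def using assms(1) \<open>a \<noteq> b\<close> by (intro digit_at_multiplicity_neq) simp_all
    ultimately show False by contradiction
  qed
  moreover have "digits ` A \<subseteq> (\<Pi>\<^sub>E s\<in>S. {0..<int p})"
    using assms(1) by (auto simp: digits_def)
  ultimately have "card A \<le> card (\<Pi>\<^sub>E s\<in>S. {0..<int p})"
    using assms(2) by (intro card_inj_on_le) (auto intro: finite_PiE)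
  also have "\<dots> = p ^ card S"
    using assms(2) by (simp add: card_PiE)
  finally show ?thesis .
qed

lemma multiplicity_diff_if_cyclotomic_product_root:
  fixes p :: nat and a b :: int
  assumes "p > 1" "finite I" "\<And>i. i \<in> I \<Longrightarrow> e i \<le> R"
    and "a \<in> {0..<int p ^ R}" "b \<in> {0..<int p ^ R}" "a \<noteq> b"
    and "poly ([:-1, 1:] * (\<Prod>i\<in>I. cyclotomic (p ^ e i))) (root_unity (p ^ R) (a - b)) = 0"
  shows "multiplicity (int p) (a - b) \<in> (\<lambda>i. R - e i) ` I"
proof -
  have not_dvd: "\<not> int p ^ R dvd a - b"
    using assms(4-6) by (auto simp: mod_eq_dvd_iff [symmetric])
  then have "root_unity (p ^ R) (a - b) \<noteq> 1"
    using assms(1) by (simp add: root_unity_eq_1_iff)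
  then obtain i where i: "i \<in> I" "poly (cyclotomic (p ^ e i)) (root_unity (p ^ R) (a - b)) = 0"
    using assms(2,7) poly_cyclotomic_product_eq_0_iff[where n = "\<lambda>i. p ^ e i"] by blast
  then have "multiplicity (int p) (a - b) = R - e i"
    using assms(1,3) not_dvd by (intro multiplicity_of_root_of_cyclotomic_prime_power) auto
  with i(1) show ?thesis by simp
qed

theorem mainTheorem4:
  fixes p m :: nat and r :: "nat \<Rightarrow> nat" and E :: "complex set"
  assumes "prime p"
    and "m \<ge> 1"
    and "r 1 \<ge> 1"
    and "\<And>i. 1 \<le> i \<Longrightarrow> i < m \<Longrightarrow> r i < r (Suc i)"
    and "E \<subseteq> {z. poly ([:-1, 1:] * (\<Prod>i\<in>{1..m}. cyclotomic (p ^ r i))) z = 0}"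
    and "\<And>e e'. e \<in> E \<Longrightarrow> e' \<in> E \<Longrightarrow>
           poly ([:-1, 1:] * (\<Prod>i\<in>{1..m}. cyclotomic (p ^ r i))) (e / e') = 0"
  shows "card E \<le> p ^ m"
proof -
  define R where "R = Max (r ` {1..m})"
  define S where "S = (\<lambda>i. R - r i) ` {1..m}"
  define \<zeta> where "\<zeta> = root_unity (p ^ R)"
  define A where "A = {a \<in> {0..<int p ^ R}. \<zeta> a \<in> E}"
  have p: "p > 1" using assms(1) by (rule prime_gt_1_nat)
  have r_le: "r i \<le> R" if "i \<in> {1..m}" for i
    using that by (simp add: R_def)
  have E_sub: "E \<subseteq> \<zeta> ` A"
  proof
    fix z assume "z \<in> E"
    with assms(5) have "poly ([:-1, 1:] * (\<Prod>i\<in>{1..m}. cyclotomic (p ^ r i))) z = 0" by blast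
    then have "\<exists>a\<in>{0..<int (p ^ R)}. z = \<zeta> a"
      unfolding \<zeta>_def using p r_le
      by (intro poly_cyclotomic_product_eq_0_imp_root_unity) (auto intro: le_imp_power_dvd)
    with \<open>z \<in> E\<close> show "z \<in> \<zeta> ` A" by (auto simp: A_def)
  qed
  have multiplicity_in_S: "multiplicity (int p) (a - b) \<in> S" if "a \<in> A" "b \<in> A" "a \<noteq> b" for a b
    using assms(6)[of "\<zeta> a" "\<zeta> b"] that p r_le unfolding S_def
    by (intro multiplicity_diff_if_cyclotomic_product_root)
      (auto simp: A_def \<zeta>_def root_unity_diff)
  have "finite A"
    unfolding A_def by (rule finite_subset[of _ "{0..<int p ^ R}"]) auto
  have "card E \<le> card (\<zeta> ` A)"
    using E_sub \<open>finite A\<close> by (intro card_mono) auto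
  also have "\<dots> \<le> card A"
    by (rule card_image_le[OF \<open>finite A\<close>])
  also have "\<dots> \<le> p ^ card S"
    using p multiplicity_in_S by (intro card_le_power_if_multiplicity_diff_in) (auto simp: S_def)
  also have "\<dots> \<le> p ^ m"
    using p card_image_le[of "{1..m}" "\<lambda>i. R - r i"] by (intro power_increasing) (auto simp: S_def)
  finally show ?thesis .
qed

end
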